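(* Let $F$ be a Banach lattice and $E\subset F$ a closed subspace such that every uo-null sequence in $E$ is norm-null. Then $E$ is dispersed.
   Context: A net $(x_\alpha)$ in $F$ order converges to $0$ if there is a net $(g_\beta)$ with $g_\beta\downarrow0$ such that for every $\beta$ there is $\alpha_0$ with $|x_\alpha|\le g_\beta$ for $\alpha\ge\alpha_0$; $(x_\alpha)$ is uo-null if $|x_\alpha|\wedge h$ order converges to $0$ for every $h\in F_+$. A closed subspace $E$ is dispersed if there is no sequence of unit vectors $(e_n)\subset E$ and disjoint sequence $(f_n)\subset F$ ($|f_n|\wedge|f_m|=0$, $n\ne m$) with $\|e_n-f_n\|\to0$. *)

theory Defs
  imports "HOL-Analysis.Analysis"
begin

class banach_lattice = banach + ordered_real_vector + lattice +
  assumes lattice_norm: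
    "sup x (- x) \<le> sup y (- y) \<Longrightarrow> norm x \<le> norm y"

definition labs :: "'a::banach_lattice \<Rightarrow> 'a" where
  "labs x = sup x (- x)"

text \<open>A decreasing net g with g \<down> 0 is represented by its range D:
  a nonempty downward directed set whose infimum is 0.\<close>
definition down_to_zero :: "'a::banach_lattice set \<Rightarrow> bool" where
  "down_to_zero D \<longleftrightarrow> D \<noteq> {}
     \<and> (\<forall>a\<in>D. \<forall>b\<in>D. \<exists>c\<in>D. c \<le> a \<and> c \<le> b)
     \<and> (\<forall>d\<in>D. 0 \<le> d)
     \<and> (\<forall>l. (\<forall>d\<in>D. l \<le> d) \<longrightarrow> l \<le> 0)"

definition order_null :: "(nat \<Rightarrow> 'a::banach_lattice) \<Rightarrow> bool" where
  "order_null x \<longleftrightarrow> (\<exists>D. down_to_zero D \<and>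
     (\<forall>g\<in>D. \<exists>N. \<forall>n\<ge>N. labs (x n) \<le> g))"

definition uo_null :: "(nat \<Rightarrow> 'a::banach_lattice) \<Rightarrow> bool" where
  "uo_null x \<longleftrightarrow> (\<forall>h. 0 \<le> h \<longrightarrow> order_null (\<lambda>n. inf (labs (x n)) h))"

definition disjoint_seq :: "(nat \<Rightarrow> 'a::banach_lattice) \<Rightarrow> bool" where
  "disjoint_seq f \<longleftrightarrow> (\<forall>n m. n \<noteq> m \<longrightarrow> inf (labs (f n)) (labs (f m)) = 0)"

definition dispersed :: "'a::banach_lattice set \<Rightarrow> bool" where
  "dispersed E \<longleftrightarrow> \<not> (\<exists>e f. (\<forall>n. e n \<in> E \<and> norm (e n) = 1) \<and> disjoint_seq f
      \<and> (\<lambda>n. norm (e n - f n)) \<longlonglongrightarrow> 0)"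

end

theory Submission
  imports Defs "HOL-Library.Lattice_Algebras"
begin

text \<open>Suppose unit vectors \<open>e\<^sub>n \<in> E\<close> satisfy \<open>\<parallel>e\<^sub>n - f\<^sub>n\<parallel> \<rightarrow> 0\<close> for a disjoint sequence
  \<open>(f\<^sub>n)\<close>. Passing to a subsequence, \<open>\<Sum>\<^sub>n \<parallel>e\<^sub>n - f\<^sub>n\<parallel> < \<infinity>\<close>. For \<open>h \<ge> 0\<close> we have
  \<open>|e\<^sub>n| \<sqinter> h \<le> d\<^sub>n + |f\<^sub>n| \<sqinter> h\<close> with \<open>d\<^sub>n = |e\<^sub>n - f\<^sub>n|\<close>. The disjoint, bounded sequence
  \<open>|f\<^sub>n| \<sqinter> h\<close> has infimum of eventual majorants 0: if \<open>w \<ge> 0\<close> lies below all of them,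
  disjointness gives \<open>k w \<le> h\<close> for every \<open>k\<close>. The summable error \<open>d\<^sub>n\<close> is absorbed by the
  tails \<open>\<Sum>\<^sub>k\<^sub>\<ge>\<^sub>N d\<^sub>k\<close>, which decrease to 0 in norm. Hence \<open>(e\<^sub>n)\<close> is uo-null, so by
  hypothesis norm-null, contradicting \<open>\<parallel>e\<^sub>n\<parallel> = 1\<close>.\<close>

context banach_lattice begin
subclass lattice_ab_group_add ..
end

lemma labs_nonneg: "0 \<le> labs (x::'a::banach_lattice)"
proof -
  have "x + (-x) \<le> labs x + labs x"
    unfolding labs_def by (intro add_mono) auto
  then show ?thesis by simp
qed

lemma le_labs: "(x::'a::banach_lattice) \<le> labs x"
  unfolding labs_def by simp

lemma labs_of_nonneg: "0 \<le> (x::'a::banach_lattice) \<Longrightarrow> labs x = x"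
  unfolding labs_def by (rule sup_absorb1) (meson neg_le_0_iff_le order_trans)

lemma labs_minus_commute: "labs ((x::'a::banach_lattice) - y) = labs (y - x)"
  unfolding labs_def by (simp add: sup_commute)

lemma norm_le_if_labs_le: "labs (x::'a::banach_lattice) \<le> labs y \<Longrightarrow> norm x \<le> norm y"
  unfolding labs_def by (rule lattice_norm)

lemma norm_labs: "norm (labs (x::'a::banach_lattice)) = norm x"
  by (intro antisym norm_le_if_labs_le) (simp_all add: labs_of_nonneg labs_nonneg)

lemma norm_mono_nonneg: "0 \<le> (x::'a::banach_lattice) \<Longrightarrow> x \<le> y \<Longrightarrow> norm x \<le> norm y"
  by (rule norm_le_if_labs_le) (simp add: labs_of_nonneg)

lemma labs_triangle: "labs ((x::'a::banach_lattice) + y) \<le> labs x + labs y"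
proof -
  have "-(x + y) \<le> labs x + labs y"
    unfolding labs_def minus_add_distrib by (intro add_mono) auto
  moreover have "x + y \<le> labs x + labs y" by (intro add_mono le_labs)
  ultimately show ?thesis unfolding labs_def[of "x + y"] by simp
qed

lemma inf_add_le: "0 \<le> (a::'a::banach_lattice) \<Longrightarrow> inf (a + b) h \<le> a + inf b h"
proof -
  assume "0 \<le> a"
  then have "inf (a + b) h \<le> inf (a + b) (a + h)"
    by (intro inf_mono) (auto simp: add_increasing)
  also have "\<dots> = a + inf b h" by (simp add: add_inf_distrib_left)
  finally show ?thesis .
qed

definition neg_part :: "'a::banach_lattice \<Rightarrow> 'a" where
  "neg_part x = sup (- x) 0"

lemma labs_neg_part_diff_le: "labs (neg_part x - neg_part y) \<le> labs ((x::'a::banach_lattice) - y)"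
proof -
  have bound: "neg_part a \<le> neg_part b + labs (a - b)" for a b :: 'a
  proof -
    have "-a \<le> -b + labs (a - b)"
      using le_labs[of "b - a"] by (simp add: labs_minus_commute algebra_simps)
    also have "\<dots> \<le> neg_part b + labs (a - b)"
      unfolding neg_part_def by (intro add_mono) auto
    finally show ?thesis
      unfolding neg_part_def using labs_nonneg[of "a - b"] by (simp add: add_nonneg_nonneg)
  qed
  have "neg_part x - neg_part y \<le> labs (x - y)"
    using bound[of x y] by (simp add: diff_le_eq add.commute)
  moreover have "-(neg_part x - neg_part y) \<le> labs (x - y)"
    using bound[of y x] by (simp add: labs_minus_commute diff_le_eq add.commute)
  ultimately show ?thesis unfolding labs_def[of "neg_part x - neg_part y"] by simp
qed

lemma closed_nonneg: "closed {x::'a::banach_lattice. 0 \<le> x}"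
  unfolding closed_sequential_limits
proof (intro allI impI, elim conjE)
  fix s and l :: 'a
  assume s: "\<forall>n. s n \<in> {x. 0 \<le> x}" and lim: "s \<longlonglongrightarrow> l"
  have "neg_part (s n) = 0" for n
    using s by (simp add: neg_part_def sup_absorb2)
  then have "norm (neg_part l) \<le> norm (l - s n)" for n
    using norm_le_if_labs_le[OF labs_neg_part_diff_le[of l "s n"]] by simp
  moreover have "(\<lambda>n. norm (l - s n)) \<longlonglongrightarrow> 0"
    using tendsto_norm_zero[OF LIM_zero[OF lim]] by (simp add: norm_minus_commute)
  ultimately have "norm (neg_part l) \<le> 0"
    by (intro LIMSEQ_le_const) auto
  then have "- l \<le> 0"
    unfolding neg_part_def by (metis norm_le_zero_iff sup.cobounded1)
  then show "l \<in> {x. 0 \<le> x}" by simp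
qed

lemma suminf_nonneg_lattice:
  fixes d :: "nat \<Rightarrow> 'a::banach_lattice"
  assumes "summable d" and "\<And>n. 0 \<le> d n"
  shows "0 \<le> suminf d"
proof -
  have "sum d {..<n} \<in> {x. 0 \<le> x}" for n by (simp add: assms(2) sum_nonneg)
  from closed_sequentially[OF closed_nonneg this summable_LIMSEQ[OF assms(1)]]
  show ?thesis by simp
qed

lemma term_le_suminf_lattice:
  fixes d :: "nat \<Rightarrow> 'a::banach_lattice"
  assumes d: "summable d" and d0: "\<And>n. 0 \<le> d n"
  shows "d m \<le> suminf d"
proof -
  have "d m \<le> sum d {..<m} + d m" by (simp add: d0 sum_nonneg)
  also have "\<dots> = (\<Sum>i<Suc m. d i)" by simp
  also have "\<dots> \<le> suminf d"
  proof -
    have "summable (\<lambda>n. d (n + Suc m))" by (simp only: summable_iff_shift d)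
    then have "0 \<le> (\<Sum>n. d (n + Suc m))" by (rule suminf_nonneg_lattice) (rule d0)
    then show ?thesis by (simp only: suminf_minus_initial_segment[OF d] diff_ge_0_iff_ge)
  qed
  finally show ?thesis .
qed

lemma tails_LIMSEQ_zero:
  fixes d :: "nat \<Rightarrow> 'a::real_normed_vector"
  assumes "summable d"
  shows "(\<lambda>N. \<Sum>k. d (k + N)) \<longlonglongrightarrow> 0"
proof -
  have "(\<lambda>N. suminf d - (\<Sum>i<N. d i)) \<longlonglongrightarrow> suminf d - suminf d"
    by (intro tendsto_diff tendsto_const summable_LIMSEQ assms)
  then show ?thesis by (simp add: suminf_minus_initial_segment[OF assms])
qed

lemma LIMSEQ_zero_imp_summable_subseq:
  fixes x :: "nat \<Rightarrow> 'a::real_normed_vector"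
  assumes "(\<lambda>n. norm (x n)) \<longlonglongrightarrow> 0"
  obtains r where "strict_mono r" and "summable (\<lambda>k. norm (x (r k)))"
proof -
  have late: "\<exists>m>n. norm (x m) < (1/2)^k" for n k :: nat
  proof -
    obtain M where "\<forall>m\<ge>M. norm (x m) < (1/2)^k"
      using LIMSEQ_D[OF assms, of "(1/2)^k"] by auto
    then show ?thesis by (intro exI[of _ "max M (Suc n)"]) auto
  qed
  have "\<exists>r. \<forall>k. norm (x (r k)) < (1/2)^k \<and> r k < r (Suc k)"
    by (rule dependent_nat_choice) (use late in blast)+
  then obtain r where r: "\<forall>k. norm (x (r k)) < (1/2)^k \<and> r k < r (Suc k)" by blast
  show ?thesis
  proof
    show "strict_mono r" using r by (simp add: strict_mono_Suc_iff)
    show "summable (\<lambda>k. norm (x (r k)))"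
      using r by (intro summable_comparison_test[OF _ summable_geometric[of "1/2::real"]])
        (auto intro: less_imp_le)
  qed
qed

text \<open>\<open>order_limsup_zero x\<close> says that the nonnegative eventual majorants of \<open>x\<close> have
  infimum 0; it is phrased via lower bounds since a Banach lattice need not be order complete.\<close>

definition eventual_majorants :: "(nat \<Rightarrow> 'a::banach_lattice) \<Rightarrow> 'a set" where
  "eventual_majorants x = {g. 0 \<le> g \<and> (\<exists>N. \<forall>n\<ge>N. x n \<le> g)}"

definition order_limsup_zero :: "(nat \<Rightarrow> 'a::banach_lattice) \<Rightarrow> bool" where
  "order_limsup_zero x \<longleftrightarrow> (\<forall>l. (\<forall>g\<in>eventual_majorants x. l \<le> g) \<longrightarrow> l \<le> 0)"

lemma order_null_if_order_limsup_zero: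
  fixes x :: "nat \<Rightarrow> 'a::banach_lattice"
  assumes bounded: "\<And>n. labs (x n) \<le> u" and lim: "order_limsup_zero (\<lambda>n. labs (x n))"
  shows "order_null x"
  unfolding order_null_def
proof (intro exI conjI)
  let ?D = "eventual_majorants (\<lambda>n. labs (x n))"
  have u: "u \<in> ?D"
    unfolding eventual_majorants_def using bounded order_trans[OF labs_nonneg bounded] by auto
  have inf: "inf a b \<in> ?D" if a: "a \<in> ?D" and b: "b \<in> ?D" for a b
  proof -
    obtain Na Nb where "\<forall>n\<ge>Na. labs (x n) \<le> a" "\<forall>n\<ge>Nb. labs (x n) \<le> b"
      using a b unfolding eventual_majorants_def by blast
    then show ?thesis
      using a b unfolding eventual_majorants_def by (auto intro!: exI[of _ "max Na Nb"])
  qed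
  show "down_to_zero ?D"
    unfolding down_to_zero_def
  proof (intro conjI ballI)
    show "?D \<noteq> {}" using u by blast
    show "\<exists>c\<in>?D. c \<le> a \<and> c \<le> b" if "a \<in> ?D" "b \<in> ?D" for a b
      using inf[OF that] by (intro bexI[of _ "inf a b"]) simp_all
    show "0 \<le> g" if "g \<in> ?D" for g using that by (simp add: eventual_majorants_def)
    show "\<forall>l. (\<forall>g\<in>?D. l \<le> g) \<longrightarrow> l \<le> 0" using lim unfolding order_limsup_zero_def .
  qed
  show "\<forall>g\<in>?D. \<exists>N. \<forall>n\<ge>N. labs (x n) \<le> g"
    unfolding eventual_majorants_def by blast
qed

lemma order_limsup_zero_disjoint:
  fixes y :: "nat \<Rightarrow> 'a::banach_lattice"
  assumes y0: "\<And>k. 0 \<le> y k" and bounded: "\<And>k. y k \<le> u"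
    and disj: "\<And>n m. n \<noteq> m \<Longrightarrow> inf (y n) (y m) = 0"
  shows "order_limsup_zero y"
  unfolding order_limsup_zero_def
proof (intro allI impI)
  fix l assume l: "\<forall>g\<in>eventual_majorants y. l \<le> g"
  define w where "w = sup l 0"
  have w0: "0 \<le> w" unfolding w_def by simp
  have w_le: "w \<le> g" if "g \<in> eventual_majorants y" for g
    using l that unfolding w_def eventual_majorants_def by auto
  \<comment> \<open>An upper bound of all \<open>y\<^sub>k\<close> is an eventual majorant even after subtracting one \<open>y\<^sub>k\<close>,
    because disjoint positive elements satisfy \<open>y\<^sub>m + y\<^sub>k = sup y\<^sub>m y\<^sub>k\<close>.\<close>
  have lower: "\<forall>k. y k \<le> v - w" if v: "\<forall>k. y k \<le> v" for v
  proof
    fix k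
    have "y m \<le> v - y k" if "m > k" for m
    proof -
      have "y m + y k = sup (y m) (y k)"
        using disj[of m k] that add_eq_inf_sup[of "y m" "y k"] by simp
      also have "\<dots> \<le> v" using v by simp
      finally show ?thesis by (simp add: le_diff_eq)
    qed
    moreover have "0 \<le> v - y k" using v by simp
    ultimately have "v - y k \<in> eventual_majorants y"
      unfolding eventual_majorants_def by (auto intro!: exI[of _ "Suc k"])
    then have "w \<le> v - y k" by (rule w_le)
    then show "y k \<le> v - w" by (metis add.commute le_diff_eq)
  qed
  have multiple: "\<forall>k. y k \<le> u - real n *\<^sub>R w" for n
  proof (induction n)
    case 0 then show ?case using bounded by simp
  next
    case (Suc n)
    have "u - real (Suc n) *\<^sub>R w = (u - real n *\<^sub>R w) - w" by (simp add: algebra_simps)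
    then show ?case using lower[OF Suc.IH] by presburger
  qed
  have "real n * norm w \<le> norm u" for n
  proof -
    have "real n *\<^sub>R w \<le> u" using multiple[of n] y0[of 0] by (metis diff_ge_0_iff_ge order_trans)
    then have "norm (real n *\<^sub>R w) \<le> norm u"
      by (rule norm_mono_nonneg[rotated]) (simp add: w0 scaleR_nonneg_nonneg)
    then show ?thesis by simp
  qed
  then have "w = 0"
    by (metis ex_less_of_nat_mult not_less zero_less_norm_iff)
  then show "l \<le> 0" unfolding w_def by (metis sup.cobounded1)
qed

lemma order_limsup_zero_summable_perturbation:
  fixes y z d :: "nat \<Rightarrow> 'a::banach_lattice"
  assumes lim: "order_limsup_zero y"
    and d0: "\<And>n. 0 \<le> d n" and d_summable: "summable (\<lambda>n. norm (d n))"
    and z_le: "\<And>n. z n \<le> d n + y n"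
  shows "order_limsup_zero z"
  unfolding order_limsup_zero_def
proof (intro allI impI)
  fix l assume l: "\<forall>g\<in>eventual_majorants z. l \<le> g"
  define s where "s N = (\<Sum>k. d (k + N))" for N
  have d: "summable d" by (rule summable_norm_cancel[OF d_summable])
  have s0: "0 \<le> s N" for N
    unfolding s_def using d d0 by (intro suminf_nonneg_lattice) auto
  have d_le_s: "d n \<le> s N" if "N \<le> n" for N n
    using term_le_suminf_lattice[of "\<lambda>k. d (k + N)" "n - N"] d d0 that by (simp add: s_def)
  have "l \<le> v" if v: "v \<in> eventual_majorants y" for v
  proof -
    obtain M where M: "\<forall>n\<ge>M. y n \<le> v" and v0: "0 \<le> v"
      using v unfolding eventual_majorants_def by blast
    have "s N + v \<in> eventual_majorants z" for N
      unfolding eventual_majorants_def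
    proof (intro CollectI conjI exI[of _ "max N M"] allI impI)
      show "0 \<le> s N + v" using v0 s0[of N] by simp
      fix n assume "max N M \<le> n"
      then have "d n + y n \<le> s N + v" using d_le_s[of N n] M by (intro add_mono) auto
      then show "z n \<le> s N + v" using z_le[of n] by (rule order_trans[rotated])
    qed
    then have "l - v \<le> s N" for N using l by (simp add: diff_le_eq)
    then have "sup (l - v) 0 \<le> s N" for N using s0 by simp
    then have "norm (sup (l - v) 0) \<le> norm (s N)" for N by (simp add: norm_mono_nonneg)
    moreover have "(\<lambda>N. norm (s N)) \<longlonglongrightarrow> 0"
      unfolding s_def by (rule tendsto_norm_zero[OF tails_LIMSEQ_zero[OF d]])
    ultimately have "norm (sup (l - v) 0) \<le> 0"
      by (intro LIMSEQ_le_const[of "\<lambda>N. norm (s N)"]) auto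
    then have "sup (l - v) 0 = 0" by simp
    then show "l \<le> v" using sup.cobounded1[of "l - v" 0] by simp
  qed
  then show "l \<le> 0" using lim unfolding order_limsup_zero_def by blast
qed

lemma uo_null_if_summable_dist_disjoint:
  fixes e f :: "nat \<Rightarrow> 'a::banach_lattice"
  assumes disj: "disjoint_seq f" and summable: "summable (\<lambda>n. norm (e n - f n))"
  shows "uo_null e"
  unfolding uo_null_def
proof (intro allI impI)
  fix h :: 'a assume h0: "0 \<le> h"
  define y where "y n = inf (labs (f n)) h" for n
  have y0: "0 \<le> y n" for n by (simp add: y_def labs_nonneg h0)
  have y_disj: "inf (y n) (y m) = 0" if "n \<noteq> m" for n m
  proof (rule antisym)
    have "inf (y n) (y m) \<le> inf (labs (f n)) (labs (f m))"
      unfolding y_def by (intro inf_mono inf_le1)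
    then show "inf (y n) (y m) \<le> 0"
      using disj that unfolding disjoint_seq_def by simp
    show "0 \<le> inf (y n) (y m)" using y0 by simp
  qed
  have y_lim: "order_limsup_zero y"
    by (rule order_limsup_zero_disjoint[where u = h, OF y0 _ y_disj]) (simp add: y_def)
  have z_le: "inf (labs (e n)) h \<le> labs (e n - f n) + y n" for n
  proof -
    have "labs (e n) \<le> labs (e n - f n) + labs (f n)"
      using labs_triangle[of "e n - f n" "f n"] by simp
    then have "inf (labs (e n)) h \<le> inf (labs (e n - f n) + labs (f n)) h" by (rule inf_mono) simp
    also have "\<dots> \<le> labs (e n - f n) + y n" unfolding y_def by (rule inf_add_le[OF labs_nonneg])
    finally show ?thesis .
  qed
  have "order_limsup_zero (\<lambda>n. inf (labs (e n)) h)"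
    using order_limsup_zero_summable_perturbation[OF y_lim labs_nonneg _ z_le] summable
    by (simp add: norm_labs)
  moreover have z_labs: "labs (inf (labs (e n)) h) = inf (labs (e n)) h" for n
    by (rule labs_of_nonneg) (simp add: labs_nonneg h0)
  ultimately show "order_null (\<lambda>n. inf (labs (e n)) h)"
    by (intro order_null_if_order_limsup_zero[of _ h]) (simp_all only: z_labs inf_le2)
qed

lemma disjoint_seq_subseq: "disjoint_seq f \<Longrightarrow> strict_mono r \<Longrightarrow> disjoint_seq (f \<circ> r)"
  unfolding disjoint_seq_def by (simp add: strict_mono_eq)

theorem mainTheorem19:
  fixes E :: "'a::banach_lattice set"
  assumes "closed E" and "subspace E"
    and "\<forall>x. (\<forall>n. x n \<in> E) \<longrightarrow> uo_null x \<longrightarrow> (\<lambda>n. norm (x n)) \<longlonglongrightarrow> 0"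
  shows "dispersed E"
  unfolding dispersed_def
proof
  assume "\<exists>e f. (\<forall>n. e n \<in> E \<and> norm (e n) = 1) \<and> disjoint_seq f
      \<and> (\<lambda>n. norm (e n - f n)) \<longlonglongrightarrow> 0"
  then obtain e f where e: "\<forall>n. e n \<in> E \<and> norm (e n) = 1" and disj: "disjoint_seq f"
    and lim: "(\<lambda>n. norm (e n - f n)) \<longlonglongrightarrow> 0" by blast
  obtain r where r: "strict_mono r" and summable: "summable (\<lambda>k. norm (e (r k) - f (r k)))"
    using LIMSEQ_zero_imp_summable_subseq[OF lim] by blast
  have "uo_null (e \<circ> r)"
    using uo_null_if_summable_dist_disjoint[OF disjoint_seq_subseq[OF disj r]] summable by simp
  then have "(\<lambda>k. norm (e (r k))) \<longlonglongrightarrow> 0" using assms(3)[rule_format, of "e \<circ> r"] e by simp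
  then have "(\<lambda>k. 1::real) \<longlonglongrightarrow> 0" using e by simp
  then show False using LIMSEQ_unique[OF tendsto_const, of "1::real" 0] by simp
qed

end
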